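(* Let $G$ be a finite group, let $\pi$ be a set of primes and let $q\in\pi$. Let $\mathcal{S}_{q'}(G_\pi)$ denote the union of all conjugacy classes $g^G$ with $g$ a $\pi$-element of $G$ such that $|g^G|$ is not divisible by $q$. Then $|\mathbf{Z}(G)|_q$ divides $|\mathcal{S}_{q'}(G_\pi)|_q$. Moreover, if $|\mathbf{Z}(G)|_q=|\mathcal{S}_{q'}(G_\pi)|_q$, then $\mathbf{Z}(Q)\le \mathbf{Z}(G)$, where $Q$ is a Sylow $q$-subgroup of $G$.
   Context: A $\pi$-element is an element whose order is divisible only by primes in $\pi$. For a positive integer $n$ and prime $q$, $n_q$ denotes the largest power of $q$ dividing $n$. $|g^G|=|G:C_G(g)|$ is the size of the conjugacy class of $g$; $\mathbf{Z}(\cdot)$ denotes the centre. *)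

theory Defs
  imports "HOL-Algebra.Algebra" "HOL-Computational_Algebra.Primes"
begin

definition ppart :: "nat \<Rightarrow> nat \<Rightarrow> nat" where
  "ppart q n = q ^ multiplicity q n"

definition pi_element :: "('a, 'b) monoid_scheme \<Rightarrow> nat set \<Rightarrow> 'a \<Rightarrow> bool" where
  "pi_element G \<pi> g \<longleftrightarrow> g \<in> carrier G \<and>
     (\<forall>p. Factorial_Ring.prime p \<and> p dvd group.ord G g \<longrightarrow> p \<in> \<pi>)"

definition conj_class :: "('a, 'b) monoid_scheme \<Rightarrow> 'a \<Rightarrow> 'a set" where
  "conj_class G g = {x \<otimes>\<^bsub>G\<^esub> g \<otimes>\<^bsub>G\<^esub> inv\<^bsub>G\<^esub> x | x. x \<in> carrier G}"

definition centre :: "('a, 'b) monoid_scheme \<Rightarrow> 'a set" where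
  "centre G = {z \<in> carrier G. \<forall>x \<in> carrier G. z \<otimes>\<^bsub>G\<^esub> x = x \<otimes>\<^bsub>G\<^esub> z}"

definition S_qprime :: "('a, 'b) monoid_scheme \<Rightarrow> nat set \<Rightarrow> nat \<Rightarrow> 'a set" where
  "S_qprime G \<pi> q = (\<Union>g \<in> {g. pi_element G \<pi> g \<and> \<not> q dvd card (conj_class G g)}. conj_class G g)"

definition sylow_subgroup :: "('a, 'b) monoid_scheme \<Rightarrow> nat \<Rightarrow> 'a set \<Rightarrow> bool" where
  "sylow_subgroup G q Q \<longleftrightarrow> subgroup Q G \<and> card Q = ppart q (order G)"

end

theory Submission
  imports Defs
begin

text \<open>
  Let \<open>S = S\<^sub>q\<^sub>'(G\<^sub>\<pi>)\<close>, let \<open>P\<close> be the Sylow \<open>q\<close>-subgroup of \<open>Z(G)\<close> and \<open>Q\<close> a Sylow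
  \<open>q\<close>-subgroup of \<open>G\<close>. Multiplying by a central \<open>q\<close>-element preserves being a \<open>\<pi>\<close>-element
  and the class size, so \<open>P\<close> acts on \<open>S\<close> by left multiplication, freely; hence \<open>|P|\<close> divides \<open>|S|\<close>.

  For the second part let \<open>Q\<close> act by conjugation on the \<open>P\<close>-cosets contained in \<open>S\<close>. A central
  \<open>q\<close>-element \<open>p \<noteq> 1\<close> never maps a \<open>q'\<close>-class into itself (the stabiliser of the class in \<open>P\<close>
  would have order dividing the class size), so a coset \<open>Pg\<close> is \<open>Q\<close>-fixed only if \<open>Q\<close>
  centralises \<open>g\<close>. Counting orbits gives \<open>|S| \<equiv> |S \<inter> C\<^sub>G(Q)| (mod q|P|)\<close>. Now \<open>Z(Q)\<close> acts
  by left multiplication on \<open>S \<inter> C\<^sub>G(Q)\<close>, so \<open>|Z(Q)|\<close> divides \<open>|S \<inter> C\<^sub>G(Q)|\<close>. Since \<open>P \<le> Z(Q)\<close>,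
  if \<open>Z(Q)\<close> is not contained in \<open>Z(G)\<close> then \<open>q|P|\<close> divides \<open>|Z(Q)|\<close> and hence \<open>|S|\<close>, so that
  \<open>|Z(G)|\<^sub>q < |S|\<^sub>q\<close>.
\<close>

lemma ppart_dvd: "ppart q n dvd n"
  unfolding ppart_def by (rule multiplicity_dvd)

lemma ppart_dvd_ppart:
  fixes q :: nat
  assumes "Factorial_Ring.prime q" "n \<noteq> 0" "ppart q m dvd n"
  shows "ppart q m dvd ppart q n"
  using assms unfolding ppart_def
  by (intro le_imp_power_dvd multiplicity_geI) (auto simp: not_prime_unit)

lemma not_prime_mult_ppart_dvd:
  fixes q :: nat
  assumes "Factorial_Ring.prime q" "n \<noteq> 0"
  shows "\<not> q * ppart q n dvd n"
  unfolding ppart_def using assms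
  by (metis Suc_n_not_le_n multiplicity_geI not_prime_unit power_Suc)

section \<open>Actions of \<open>q\<close>-groups\<close>

lemma group_action_restrict:
  fixes R (structure)
  assumes R: "group R"
    and closed: "\<And>x e. x \<in> carrier R \<Longrightarrow> e \<in> E \<Longrightarrow> f x e \<in> E"
    and one: "\<And>e. e \<in> E \<Longrightarrow> f \<one> e = e"
    and mult: "\<And>x y e. x \<in> carrier R \<Longrightarrow> y \<in> carrier R \<Longrightarrow> e \<in> E \<Longrightarrow> f (x \<otimes> y) e = f x (f y e)"
  shows "group_action R E (\<lambda>x. restrict (f x) E)"
proof -
  interpret R: group R by (rule R)
  have bij: "restrict (f x) E \<in> Bij E" if x: "x \<in> carrier R" for x
  proof -
    have "bij_betw (f x) E E"
      by (rule bij_betw_byWitness[where f' = "f (inv x)"])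
        (use closed one mult[of "inv x" x] mult[of x "inv x"] x in auto)
    then show ?thesis unfolding Bij_def using bij_betw_cong[of E "restrict (f x) E" "f x" E] by simp
  qed
  have "(\<lambda>x. restrict (f x) E) \<in> hom R (BijGroup E)"
  proof (rule homI)
    fix x y assume x: "x \<in> carrier R" and y: "y \<in> carrier R"
    have "restrict (f (x \<otimes> y)) E = compose E (restrict (f x) E) (restrict (f y) E)"
      unfolding compose_def using mult[OF x y] closed[OF y] by auto
    then show "restrict (f (x \<otimes> y)) E = restrict (f x) E \<otimes>\<^bsub>BijGroup E\<^esub> restrict (f y) E"
      using bij x y by (simp add: BijGroup_def)
  qed (use bij in \<open>simp add: BijGroup_def\<close>)
  then show ?thesis
    unfolding group_action_def group_hom_def group_hom_axioms_def using R group_BijGroup by blast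
qed

context group_action begin

lemma orbit_eq_singleton_iff:
  assumes "e \<in> E"
  shows "orbit G \<phi> e = {e} \<longleftrightarrow> (\<forall>x \<in> carrier G. \<phi> x e = e)"
  using orbit_refl[OF assms] unfolding orbit_def by blast

lemma prime_dvd_card_orbit:
  assumes card: "card (carrier G) = q ^ k" and q: "Factorial_Ring.prime (q::nat)"
    and e: "e \<in> E" and moved: "\<exists>x \<in> carrier G. \<phi> x e \<noteq> e"
  shows "q dvd card (orbit G \<phi> e)"
proof -
  have "card (orbit G \<phi> e) dvd q ^ k"
    using orbit_stabilizer_theorem[OF e] card unfolding order_def by (metis dvd_triv_left)
  then obtain i where i: "card (orbit G \<phi> e) = q ^ i"
    using divides_primepow_nat[OF q] by blast
  have "i \<noteq> 0"
  proof
    assume "i = 0"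
    then have "orbit G \<phi> e = {e}"
      using i orbit_refl[OF e] by (metis card_1_singletonE power_0 singletonD)
    then show False using orbit_eq_singleton_iff[OF e] moved by blast
  qed
  then show ?thesis using i by simp
qed

theorem prime_dvd_card_non_fixed_points:
  assumes fin: "finite E" and card: "card (carrier G) = q ^ k" and q: "Factorial_Ring.prime (q::nat)"
  shows "q dvd card {e \<in> E. \<exists>x \<in> carrier G. \<phi> x e \<noteq> e}"
proof -
  let ?N = "{e \<in> E. \<exists>x \<in> carrier G. \<phi> x e \<noteq> e}"
  have orbit_subset: "orbit G \<phi> e \<subseteq> ?N" if e: "e \<in> ?N" for e
  proof
    fix e' assume e': "e' \<in> orbit G \<phi> e"
    have "e' \<in> E" using e e' element_image unfolding orbit_def by auto
    moreover have "e \<in> orbit G \<phi> e'" using orbit_sym e e' \<open>e' \<in> E\<close> by blast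
    ultimately show "e' \<in> ?N" using e orbit_eq_singleton_iff by fastforce
  qed
  have "q dvd card (\<Union> {orbit G \<phi> e | e. e \<in> ?N})"
  proof (rule dvd_partition)
    show "finite (\<Union> {orbit G \<phi> e | e. e \<in> ?N})"
      using orbit_subset fin by (auto intro: finite_subset)
    show "\<forall>c \<in> {orbit G \<phi> e | e. e \<in> ?N}. q dvd card c"
      using prime_dvd_card_orbit[OF card q] by auto
    show "\<forall>c1 \<in> {orbit G \<phi> e | e. e \<in> ?N}. \<forall>c2 \<in> {orbit G \<phi> e | e. e \<in> ?N}.
        c1 \<noteq> c2 \<longrightarrow> c1 \<inter> c2 = {}"
      using disjoint_union unfolding orbits_def by blast
  qed
  moreover have "\<Union> {orbit G \<phi> e | e. e \<in> ?N} = ?N"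
    using orbit_subset orbit_refl by blast
  ultimately show ?thesis by simp
qed

end

lemma prime_dvd_card_non_fixed_points_restrict:
  fixes R (structure)
  assumes R: "group R" and card: "card (carrier R) = q ^ k" and q: "Factorial_Ring.prime (q::nat)"
    and fin: "finite E"
    and closed: "\<And>x e. x \<in> carrier R \<Longrightarrow> e \<in> E \<Longrightarrow> f x e \<in> E"
    and one: "\<And>e. e \<in> E \<Longrightarrow> f \<one> e = e"
    and mult: "\<And>x y e. x \<in> carrier R \<Longrightarrow> y \<in> carrier R \<Longrightarrow> e \<in> E \<Longrightarrow> f (x \<otimes> y) e = f x (f y e)"
  shows "q dvd card {e \<in> E. \<exists>x \<in> carrier R. f x e \<noteq> e}"
  using group_action.prime_dvd_card_non_fixed_points[OF group_action_restrict[OF R closed one mult] fin card q]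
  by (simp cong: conj_cong)

section \<open>Centralizers and conjugacy classes\<close>

definition centralizer :: "('a, 'b) monoid_scheme \<Rightarrow> 'a set \<Rightarrow> 'a set" where
  "centralizer G H = {g \<in> carrier G. \<forall>x \<in> H. x \<otimes>\<^bsub>G\<^esub> g = g \<otimes>\<^bsub>G\<^esub> x}"

context group begin

lemma centralizer_subset_carrier: "centralizer G H \<subseteq> carrier G"
  unfolding centralizer_def by auto

lemma subgroup_centralizer:
  assumes "H \<subseteq> carrier G"
  shows "subgroup (centralizer G H) G"
proof (rule subgroupI)
  fix a b assume a: "a \<in> centralizer G H"
  then have ac: "a \<in> carrier G" and ax: "\<And>x. x \<in> H \<Longrightarrow> x \<otimes> a = a \<otimes> x"
    unfolding centralizer_def by auto
  have "x \<otimes> inv a = inv a \<otimes> x" if x: "x \<in> H" for x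
  proof -
    have xc: "x \<in> carrier G" using x assms by auto
    have "x \<otimes> inv a = inv a \<otimes> (a \<otimes> x) \<otimes> inv a" using ac xc by (simp add: m_assoc[symmetric])
    also have "\<dots> = inv a \<otimes> (x \<otimes> a) \<otimes> inv a" using ax x by simp
    also have "\<dots> = inv a \<otimes> x" using ac xc by (simp add: m_assoc)
    finally show ?thesis .
  qed
  then show "inv a \<in> centralizer G H" using ac unfolding centralizer_def by auto
  assume "b \<in> centralizer G H"
  then show "a \<otimes> b \<in> centralizer G H"
    using a assms unfolding centralizer_def by (auto simp: m_assoc[symmetric]) (metis m_assoc subsetD)
qed (use assms in \<open>auto simp: centralizer_def intro!: exI[of _ \<one>]\<close>)

lemma centre_eq_centralizer: "centre G = centralizer G (carrier G)"
  unfolding centre_def centralizer_def by auto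

lemma centre_subgroup: "subgroup (centre G) G"
  by (simp add: centre_eq_centralizer subgroup_centralizer)

lemma centre_commute: "z \<in> centre G \<Longrightarrow> x \<in> carrier G \<Longrightarrow> z \<otimes> x = x \<otimes> z"
  unfolding centre_def by auto

lemma centre_closed: "z \<in> centre G \<Longrightarrow> z \<in> carrier G"
  unfolding centre_def by auto

lemma centre_subgroup_eq_centralizer:
  "H \<subseteq> carrier G \<Longrightarrow> centre (G\<lparr>carrier := H\<rparr>) = H \<inter> centralizer G H"
  unfolding centre_def centralizer_def by auto

lemma centre_subset_centralizer: "H \<subseteq> carrier G \<Longrightarrow> centre G \<subseteq> centralizer G H"
  unfolding centre_def centralizer_def by auto

lemma subgroup_centre_subgroup:
  assumes "subgroup H G"
  shows "subgroup (centre (G\<lparr>carrier := H\<rparr>)) G"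
proof -
  interpret H: group "G\<lparr>carrier := H\<rparr>"
    using assms subgroup.subgroup_is_group is_group by blast
  show ?thesis using incl_subgroup[OF assms H.centre_subgroup] .
qed

lemma conj_class_subset_carrier: "g \<in> carrier G \<Longrightarrow> conj_class G g \<subseteq> carrier G"
  unfolding conj_class_def by auto

lemma conj_class_self: "g \<in> carrier G \<Longrightarrow> g \<in> conj_class G g"
  unfolding conj_class_def by (auto intro!: exI[of _ \<one>])

lemma conj_class_one: "conj_class G \<one> = {\<one>}"
  unfolding conj_class_def by (auto intro!: exI[of _ \<one>])

lemma conj_class_conj_subset:
  assumes g: "g \<in> carrier G" and y: "y \<in> carrier G"
  shows "conj_class G (y \<otimes> g \<otimes> inv y) \<subseteq> conj_class G g"
proof
  fix k assume "k \<in> conj_class G (y \<otimes> g \<otimes> inv y)"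
  then obtain x where x: "x \<in> carrier G" "k = x \<otimes> (y \<otimes> g \<otimes> inv y) \<otimes> inv x"
    unfolding conj_class_def by auto
  then have "k = (x \<otimes> y) \<otimes> g \<otimes> inv (x \<otimes> y)"
    using g y by (simp add: inv_mult_group m_assoc)
  then show "k \<in> conj_class G g" using x y unfolding conj_class_def by blast
qed

lemma conj_class_eq:
  assumes g: "g \<in> carrier G" and h: "h \<in> conj_class G g"
  shows "conj_class G h = conj_class G g"
proof -
  obtain y where y: "y \<in> carrier G" "h = y \<otimes> g \<otimes> inv y"
    using h unfolding conj_class_def by auto
  have "g = inv y \<otimes> h \<otimes> inv (inv y)"
    using y g by (simp add: m_assoc) (simp add: m_assoc[symmetric])
  then have "conj_class G g \<subseteq> conj_class G h"
    using conj_class_conj_subset[of h "inv y"] y g by simp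
  then show ?thesis using conj_class_conj_subset y g by blast
qed

lemma conj_pow:
  assumes g: "g \<in> carrier G" and x: "x \<in> carrier G"
  shows "(x \<otimes> g \<otimes> inv x) [^] (n::nat) = x \<otimes> g [^] n \<otimes> inv x"
proof (induction n)
  case (Suc n)
  have "x \<otimes> g [^] n \<otimes> inv x \<otimes> (x \<otimes> g \<otimes> inv x) = x \<otimes> (g [^] n \<otimes> g) \<otimes> inv x"
    using g x by (simp add: m_assoc[symmetric]) (simp add: m_assoc)
  then show ?case using Suc by simp
qed (use x in simp)

lemma conj_eq_one_iff:
  "a \<in> carrier G \<Longrightarrow> x \<in> carrier G \<Longrightarrow> x \<otimes> a \<otimes> inv x = \<one> \<longleftrightarrow> a = \<one>"
  by (metis inv_closed l_cancel_one m_closed r_cancel r_inv)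

lemma ord_conj:
  assumes g: "g \<in> carrier G" and x: "x \<in> carrier G"
  shows "ord (x \<otimes> g \<otimes> inv x) = ord g"
proof -
  have "\<forall>n. (x \<otimes> g \<otimes> inv x) [^] n = \<one> \<longleftrightarrow> ord g dvd n"
  proof
    fix n :: nat
    show "(x \<otimes> g \<otimes> inv x) [^] n = \<one> \<longleftrightarrow> ord g dvd n"
      using conj_pow[OF g x] conj_eq_one_iff[OF nat_pow_closed[OF g] x] pow_eq_id[OF g] by simp
  qed
  then show ?thesis using ord_unique g x by simp
qed

lemma pi_element_conj:
  "pi_element G \<pi> g \<Longrightarrow> x \<in> carrier G \<Longrightarrow> pi_element G \<pi> (x \<otimes> g \<otimes> inv x)"
  unfolding pi_element_def using ord_conj by auto

lemma conj_class_eq_image: "conj_class G g = (\<lambda>x. x \<otimes> g \<otimes> inv x) ` carrier G"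
  unfolding conj_class_def by auto

lemma l_coset_eq_image: "z <# K = (\<lambda>h. z \<otimes> h) ` K"
  unfolding l_coset_def by auto

lemma conj_class_central_mult:
  assumes z: "z \<in> centre G" and g: "g \<in> carrier G"
  shows "conj_class G (z \<otimes> g) = z <# conj_class G g"
proof -
  have "x \<otimes> (z \<otimes> g) \<otimes> inv x = z \<otimes> (x \<otimes> g \<otimes> inv x)" if x: "x \<in> carrier G" for x
    using centre_commute[OF z x] centre_closed[OF z] x g by (metis m_assoc m_closed inv_closed)
  then show ?thesis
    unfolding conj_class_eq_image l_coset_eq_image image_image by (rule image_cong[OF refl])
qed

lemma card_conj_class_central_mult:
  assumes z: "z \<in> centre G" and g: "g \<in> carrier G"
  shows "card (conj_class G (z \<otimes> g)) = card (conj_class G g)"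
proof -
  have "inj_on (\<lambda>h. z \<otimes> h) (conj_class G g)"
    using centre_closed[OF z] conj_class_subset_carrier[OF g] l_cancel unfolding inj_on_def by blast
  then show ?thesis
    by (simp add: conj_class_central_mult[OF assms] l_coset_eq_image card_image)
qed

lemma card_conj_class_mult_card_centralizer:
  assumes g: "g \<in> carrier G"
  shows "card (conj_class G g) * card (centralizer G {g}) = order G"
proof -
  let ?conj = "\<lambda>x. \<lambda>h \<in> carrier G. x \<otimes> h \<otimes> inv x"
  interpret conj: group_action G "carrier G" ?conj
    by (rule action_by_conjugation)
  have "orbit G ?conj g = conj_class G g"
    unfolding orbit_def conj_class_def using g by auto
  moreover have "x \<otimes> g \<otimes> inv x = g \<longleftrightarrow> g \<otimes> x = x \<otimes> g" if "x \<in> carrier G" for x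
    using g that by (metis inv_solve_right m_closed)
  then have "stabilizer G ?conj g = centralizer G {g}"
    unfolding stabilizer_def centralizer_def using g by auto
  ultimately show ?thesis using conj.orbit_stabilizer_theorem[OF g] by simp
qed

lemma card_subgroup_mult_card_rcoset_image:
  assumes fin: "finite (carrier G)" and H: "subgroup H G" and W: "W \<subseteq> carrier G"
    and closed: "\<And>h w. h \<in> H \<Longrightarrow> w \<in> W \<Longrightarrow> h \<otimes> w \<in> W"
  shows "card H * card ((\<lambda>w. H #> w) ` W) = card W"
proof -
  have union: "\<Union> ((\<lambda>w. H #> w) ` W) = W"
  proof
    show "\<Union> ((\<lambda>w. H #> w) ` W) \<subseteq> W" using closed unfolding r_coset_def by auto
    show "W \<subseteq> \<Union> ((\<lambda>w. H #> w) ` W)" using rcos_self[OF _ H] W by blast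
  qed
  have rcosets: "(\<lambda>w. H #> w) ` W \<subseteq> rcosets H"
    using W unfolding RCOSETS_def by auto
  have "card H * card ((\<lambda>w. H #> w) ` W) = card (\<Union> ((\<lambda>w. H #> w) ` W))"
  proof (rule card_partition)
    show "finite ((\<lambda>w. H #> w) ` W)" using W fin finite_subset by blast
    show "finite (\<Union> ((\<lambda>w. H #> w) ` W))" using union W fin finite_subset by auto
    show "\<And>c. c \<in> (\<lambda>w. H #> w) ` W \<Longrightarrow> card c = card H"
      using rcosets card_rcosets_equal H subgroup.subset by (metis subsetD)
    show "\<And>c1 c2. c1 \<in> (\<lambda>w. H #> w) ` W \<Longrightarrow> c2 \<in> (\<lambda>w. H #> w) ` W \<Longrightarrow> c1 \<noteq> c2 \<Longrightarrow> c1 \<inter> c2 = {}"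
      using rcos_disjoint[OF H] rcosets unfolding pairwise_def disjnt_def by blast
  qed
  then show ?thesis using union by simp
qed

lemma card_subgroup_dvd_card_closed:
  assumes "finite (carrier G)" "subgroup H G" "W \<subseteq> carrier G"
    and "\<And>h w. h \<in> H \<Longrightarrow> w \<in> W \<Longrightarrow> h \<otimes> w \<in> W"
  shows "card H dvd card W"
  using card_subgroup_mult_card_rcoset_image[OF assms] by (metis dvd_triv_left)

lemma card_subgroup_dvd_card_subgroup:
  assumes "finite (carrier G)" "subgroup H G" "subgroup K G" "H \<subseteq> K"
  shows "card H dvd card K"
  using assms subgroup.subset[OF assms(3)]
  by (intro card_subgroup_dvd_card_closed) (auto intro: subgroup.m_closed)

lemma pow_card_subgroup_eq_one:
  assumes fin: "finite (carrier G)" and H: "subgroup H G" and z: "z \<in> H"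
  shows "z [^] card H = \<one>"
proof -
  interpret H: group "G\<lparr>carrier := H\<rparr>"
    using H subgroup.subgroup_is_group is_group by blast
  have "z [^]\<^bsub>G\<lparr>carrier := H\<rparr>\<^esub> order (G\<lparr>carrier := H\<rparr>) = \<one>"
    using H.pow_order_eq_1 z by simp
  then show ?thesis using nat_pow_consistent[of z "card H" H] by (simp add: order_def)
qed

section \<open>The set \<open>S\<^sub>q\<^sub>'(G\<^sub>\<pi>)\<close>\<close>

lemma pi_element_mult_commuting_prime_power_element:
  assumes q: "Factorial_Ring.prime (q::nat)" "q \<in> \<pi>" and z: "z \<in> carrier G"
    and g: "pi_element G \<pi> g" and comm: "z \<otimes> g = g \<otimes> z" and zq: "z [^] (q ^ k) = \<one>"
  shows "pi_element G \<pi> (z \<otimes> g)"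
  unfolding pi_element_def
proof (intro conjI allI impI)
  have gc: "g \<in> carrier G" using g unfolding pi_element_def by auto
  then show "z \<otimes> g \<in> carrier G" using z by simp
  fix p :: nat assume p: "Factorial_Ring.prime p \<and> p dvd ord (z \<otimes> g)"
  then have "p dvd ord z \<or> p dvd ord g"
    using ord_mul_divides[OF comm z gc] dvd_trans prime_dvd_mult_iff by blast
  moreover have "p dvd ord z \<Longrightarrow> p = q"
    using pow_eq_id[OF z] zq p q(1) by (metis dvd_trans prime_dvd_power primes_dvd_imp_eq)
  ultimately show "p \<in> \<pi>" using g p q(2) unfolding pi_element_def by blast
qed

lemma S_qprime_iff: "g \<in> S_qprime G \<pi> q \<longleftrightarrow> pi_element G \<pi> g \<and> \<not> q dvd card (conj_class G g)"
proof
  assume "g \<in> S_qprime G \<pi> q"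
  then obtain h where h: "pi_element G \<pi> h" "\<not> q dvd card (conj_class G h)" "g \<in> conj_class G h"
    unfolding S_qprime_def by auto
  have "h \<in> carrier G" using h(1) unfolding pi_element_def by auto
  then have "conj_class G g = conj_class G h" using conj_class_eq h(3) by blast
  moreover have "pi_element G \<pi> g" using h(3) pi_element_conj[OF h(1)] unfolding conj_class_def by auto
  ultimately show "pi_element G \<pi> g \<and> \<not> q dvd card (conj_class G g)" using h(2) by simp
next
  assume g: "pi_element G \<pi> g \<and> \<not> q dvd card (conj_class G g)"
  then have "g \<in> conj_class G g" using conj_class_self unfolding pi_element_def by auto
  then show "g \<in> S_qprime G \<pi> q" using g unfolding S_qprime_def by blast
qed

lemma S_qprime_subset_carrier: "S_qprime G \<pi> q \<subseteq> carrier G"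
  using S_qprime_iff unfolding pi_element_def by auto

lemma one_in_S_qprime:
  assumes "Factorial_Ring.prime q"
  shows "\<one> \<in> S_qprime G \<pi> q"
  using assms unfolding S_qprime_iff pi_element_def conj_class_one
  by (auto simp: prime_gt_1_nat)

lemma card_S_qprime_neq_zero:
  assumes "finite (carrier G)" "Factorial_Ring.prime q"
  shows "card (S_qprime G \<pi> q) \<noteq> 0"
  using one_in_S_qprime[OF assms(2)] finite_subset[OF S_qprime_subset_carrier assms(1)]
  by (auto simp: card_eq_0_iff)

lemma S_qprime_conj:
  assumes g: "g \<in> S_qprime G \<pi> q" and x: "x \<in> carrier G"
  shows "x \<otimes> g \<otimes> inv x \<in> S_qprime G \<pi> q"
proof -
  have g: "pi_element G \<pi> g" "\<not> q dvd card (conj_class G g)" using g S_qprime_iff by auto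
  have "x \<otimes> g \<otimes> inv x \<in> conj_class G g" using x unfolding conj_class_def by blast
  then have "conj_class G (x \<otimes> g \<otimes> inv x) = conj_class G g"
    using conj_class_eq g(1) unfolding pi_element_def by blast
  then show ?thesis using S_qprime_iff pi_element_conj[OF g(1) x] g(2) by auto
qed

lemma S_qprime_central_mult:
  assumes q: "Factorial_Ring.prime (q::nat)" "q \<in> \<pi>"
    and z: "z \<in> centre G" "z [^] (q ^ k) = \<one>" and g: "g \<in> S_qprime G \<pi> q"
  shows "z \<otimes> g \<in> S_qprime G \<pi> q"
proof -
  have gc: "g \<in> carrier G" using g S_qprime_subset_carrier by auto
  have "pi_element G \<pi> (z \<otimes> g)"
    using pi_element_mult_commuting_prime_power_element[OF q centre_closed[OF z(1)] _ _ z(2)]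
      centre_commute[OF z(1) gc] g S_qprime_iff by blast
  then show ?thesis
    using card_conj_class_central_mult[OF z(1) gc] g S_qprime_iff by simp
qed

lemma S_qprime_central_subgroup_mult:
  assumes fin: "finite (carrier G)" and q: "Factorial_Ring.prime q" "q \<in> \<pi>"
    and P: "subgroup P G" "P \<subseteq> centre G" "card P = q ^ a"
    and p: "p \<in> P" and g: "g \<in> S_qprime G \<pi> q"
  shows "p \<otimes> g \<in> S_qprime G \<pi> q"
proof -
  have "p [^] q ^ a = \<one>" using pow_card_subgroup_eq_one[OF fin P(1) p] P(3) by simp
  with S_qprime_central_mult[OF q] P(2) p g show ?thesis by blast
qed

lemma not_dvd_card_conj_class_if_centralized_by_sylow:
  assumes fin: "finite (carrier G)" and q: "Factorial_Ring.prime q"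
    and Q: "sylow_subgroup G q Q" and h: "h \<in> carrier G" and cent: "Q \<subseteq> centralizer G {h}"
  shows "\<not> q dvd card (conj_class G h)"
proof
  assume "q dvd card (conj_class G h)"
  moreover have "card Q dvd card (centralizer G {h})"
    using Q cent h unfolding sylow_subgroup_def
    by (intro card_subgroup_dvd_card_subgroup[OF fin] subgroup_centralizer) auto
  ultimately have "q * card Q dvd order G"
    using card_conj_class_mult_card_centralizer[OF h] mult_dvd_mono by metis
  then show False
    using Q not_prime_mult_ppart_dvd[OF q] fin order_gt_0_iff_finite
    unfolding sylow_subgroup_def by (metis less_irrefl)
qed

section \<open>Central \<open>q\<close>-subgroups\<close>

lemma exists_sylow_subgroup_of_subgroup:
  assumes fin: "finite (carrier G)" and H: "subgroup H G" and q: "Factorial_Ring.prime q"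
  shows "\<exists>P. subgroup P G \<and> P \<subseteq> H \<and> card P = ppart q (card H)"
proof -
  interpret H: group "G\<lparr>carrier := H\<rparr>"
    using H subgroup.subgroup_is_group is_group by blast
  have "finite H" using fin H subgroup.subset finite_subset by blast
  moreover have "order (G\<lparr>carrier := H\<rparr>) = ppart q (card H) * (card H div ppart q (card H))"
    unfolding order_def by (simp add: ppart_dvd)
  ultimately obtain P where "subgroup P (G\<lparr>carrier := H\<rparr>)" "card P = ppart q (card H)"
    using sylow_thm[OF q H.is_group, where m = "card H div ppart q (card H)"]
    unfolding ppart_def by auto
  then show ?thesis using incl_subgroup[OF H] subgroup.subset by fastforce
qed

lemma central_lcos_rcos:
  assumes z: "z \<in> centre G" and K: "K \<subseteq> carrier G" and g: "g \<in> carrier G"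
  shows "z <# (K #> g) = K #> (z \<otimes> g)"
proof -
  have "z \<otimes> (y \<otimes> g) = y \<otimes> (z \<otimes> g)" if y: "y \<in> K" for y
    using centre_commute[OF z, of y] centre_closed[OF z] y K g by (simp add: m_assoc[symmetric] subsetD)
  then show ?thesis unfolding l_coset_def r_coset_def by auto
qed

lemma prime_dvd_card_rcosets_moved_by_central_subgroup:
  assumes fin: "finite (carrier G)" and q: "Factorial_Ring.prime q"
    and P: "subgroup P G" "P \<subseteq> centre G" "card P = q ^ a" and Q: "subgroup Q G"
  shows "q dvd card {C \<in> rcosets Q. \<exists>z \<in> P. z <# C \<noteq> C}"
proof -
  interpret P: group "G\<lparr>carrier := P\<rparr>"
    using P subgroup.subgroup_is_group is_group by blast
  have coset_sub: "C \<subseteq> carrier G" if "C \<in> rcosets Q" for C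
    using subgroup.rcosets_carrier[OF Q is_group that] .
  have Pcar: "P \<subseteq> carrier G" using P(1) subgroup.subset by blast
  have "q dvd card {C \<in> rcosets Q. \<exists>z \<in> carrier (G\<lparr>carrier := P\<rparr>). z <# C \<noteq> C}"
  proof (rule prime_dvd_card_non_fixed_points_restrict[OF P.is_group _ q])
    show "card (carrier (G\<lparr>carrier := P\<rparr>)) = q ^ a" using P(3) by simp
    show "finite (rcosets Q)" using fin Q subgroup.subset by (simp add: RCOSETS_def)
    show "z <# C \<in> rcosets Q" if "z \<in> carrier (G\<lparr>carrier := P\<rparr>)" "C \<in> rcosets Q" for z C
      using that central_lcos_rcos[of z Q] P(2) Pcar subgroup.subset[OF Q]
      unfolding RCOSETS_def by (auto simp: subsetD)
    show "\<one>\<^bsub>G\<lparr>carrier := P\<rparr>\<^esub> <# C = C" if "C \<in> rcosets Q" for C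
      using lcos_mult_one coset_sub that by simp
    show "(z \<otimes>\<^bsub>G\<lparr>carrier := P\<rparr>\<^esub> y) <# C = z <# (y <# C)"
      if "z \<in> carrier (G\<lparr>carrier := P\<rparr>)" "y \<in> carrier (G\<lparr>carrier := P\<rparr>)" "C \<in> rcosets Q"
      for z y C
      using that lcos_m_assoc coset_sub Pcar by (simp add: subsetD)
  qed
  then show ?thesis by simp
qed

lemma not_prime_dvd_card_rcosets_sylow:
  assumes fin: "finite (carrier G)" and q: "Factorial_Ring.prime q" and Q: "sylow_subgroup G q Q"
  shows "\<not> q dvd card (rcosets Q)"
proof
  have Qsub: "subgroup Q G" using Q unfolding sylow_subgroup_def by simp
  assume "q dvd card (rcosets Q)"
  then have "q * card Q dvd order G" using lagrange[OF Qsub] by (metis mult_dvd_mono dvd_refl)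
  then show False
    using Q not_prime_mult_ppart_dvd[OF q] fin order_gt_0_iff_finite
    unfolding sylow_subgroup_def by simp
qed

lemma central_prime_power_subgroup_subset_sylow:
  assumes fin: "finite (carrier G)" and q: "Factorial_Ring.prime q"
    and P: "subgroup P G" "P \<subseteq> centre G" "card P = q ^ a" and Q: "sylow_subgroup G q Q"
  shows "P \<subseteq> Q"
proof -
  have Qsub: "subgroup Q G" using Q unfolding sylow_subgroup_def by simp
  have "\<exists>C \<in> rcosets Q. \<forall>z \<in> P. z <# C = C"
  proof (rule ccontr)
    assume "\<not> (\<exists>C \<in> rcosets Q. \<forall>z \<in> P. z <# C = C)"
    then have "{C \<in> rcosets Q. \<exists>z \<in> P. z <# C \<noteq> C} = rcosets Q" by auto
    then show False
      using prime_dvd_card_rcosets_moved_by_central_subgroup[OF fin q P Qsub]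
        not_prime_dvd_card_rcosets_sylow[OF fin q Q] by simp
  qed
  then obtain g where g: "g \<in> carrier G" "\<And>z. z \<in> P \<Longrightarrow> z <# (Q #> g) = Q #> g"
    unfolding RCOSETS_def by auto
  show "P \<subseteq> Q"
  proof
    fix z assume z: "z \<in> P"
    have "z \<otimes> g \<in> Q #> g"
      using g(2)[OF z] rcos_self[OF g(1) Qsub] unfolding l_coset_def by blast
    then have "z \<otimes> g \<otimes> inv g \<in> Q" using subgroup.rcos_module_imp[OF Qsub is_group g(1)] by blast
    then show "z \<in> Q" using z subgroup.subset[OF P(1)] g(1) by (simp add: m_assoc subsetD)
  qed
qed

lemma subgroup_lcos_stabilizer:
  assumes P: "subgroup P G" and K: "K \<subseteq> carrier G"
  shows "subgroup {w \<in> P. w <# K = K} G"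
proof (rule subgroupI)
  have Pcar: "P \<subseteq> carrier G" using P subgroup.subset by blast
  then show "{w \<in> P. w <# K = K} \<subseteq> carrier G" by auto
  show "{w \<in> P. w <# K = K} \<noteq> {}"
    using lcos_mult_one[OF K] subgroup.one_closed[OF P] by auto
  fix a b assume a: "a \<in> {w \<in> P. w <# K = K}"
  then have ac: "a \<in> carrier G" using Pcar by auto
  have "inv a <# K = inv a <# (a <# K)" using a by simp
  also have "\<dots> = K" using lcos_m_assoc[OF K, of "inv a" a] ac lcos_mult_one[OF K] by simp
  finally show "inv a \<in> {w \<in> P. w <# K = K}" using subgroup.m_inv_closed[OF P] a by auto
  assume "b \<in> {w \<in> P. w <# K = K}"
  then show "a \<otimes> b \<in> {w \<in> P. w <# K = K}"
    using a lcos_m_assoc[OF K, of a b] ac Pcar subgroup.m_closed[OF P] by (auto simp: subsetD)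
qed

lemma central_prime_power_mult_mem_conj_class_eq_one:
  assumes fin: "finite (carrier G)" and q: "Factorial_Ring.prime q"
    and P: "subgroup P G" "P \<subseteq> centre G" "card P = q ^ a"
    and h: "h \<in> carrier G" "\<not> q dvd card (conj_class G h)"
    and p: "p \<in> P" "p \<otimes> h \<in> conj_class G h"
  shows "p = \<one>"
proof -
  let ?K = "conj_class G h"
  let ?P0 = "{w \<in> P. w <# ?K = ?K}"
  have K: "?K \<subseteq> carrier G" using conj_class_subset_carrier[OF h(1)] .
  have P0: "subgroup ?P0 G" using subgroup_lcos_stabilizer[OF P(1) K] .
  have "card ?P0 dvd card ?K"
    by (rule card_subgroup_dvd_card_closed[OF fin P0 K]) (auto simp: l_coset_def)
  moreover have "card ?P0 dvd q ^ a"
    using card_subgroup_dvd_card_subgroup[OF fin P0 P(1)] P(3) by auto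
  then obtain j where j: "card ?P0 = q ^ j" using divides_primepow_nat[OF q] by auto
  ultimately have "card ?P0 = 1" using h(2) by (cases j) auto
  moreover have "\<one> \<in> ?P0" and "p \<in> ?P0"
    using lcos_mult_one[OF K] subgroup.one_closed[OF P(1)] p P(2) h(1)
      conj_class_central_mult[of p h] conj_class_eq[OF h(1) p(2)] by auto
  ultimately show "p = \<one>" by (metis card_1_singletonE singletonD)
qed

lemma conj_image_central_rcos:
  assumes P: "P \<subseteq> centre G" and x: "x \<in> carrier G" and g: "g \<in> carrier G"
  shows "(\<lambda>c. x \<otimes> c \<otimes> inv x) ` (P #> g) = P #> (x \<otimes> g \<otimes> inv x)"
proof -
  have "x \<otimes> (p \<otimes> g) \<otimes> inv x = p \<otimes> (x \<otimes> g \<otimes> inv x)" if p: "p \<in> P" for p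
    using centre_commute[of p x] centre_closed[of p] p P x g by (auto simp: m_assoc[symmetric] subsetD)
  then show ?thesis unfolding r_coset_def by force
qed

lemma S_qprime_rcos_conj_eq_iff:
  assumes fin: "finite (carrier G)" and q: "Factorial_Ring.prime q"
    and P: "subgroup P G" "P \<subseteq> centre G" "card P = q ^ a"
    and g: "g \<in> S_qprime G \<pi> q" and x: "x \<in> carrier G"
  shows "P #> (x \<otimes> g \<otimes> inv x) = P #> g \<longleftrightarrow> x \<otimes> g = g \<otimes> x"
proof -
  let ?h = "x \<otimes> g \<otimes> inv x"
  have gc: "g \<in> carrier G" using g S_qprime_subset_carrier by auto
  have hc: "?h \<in> carrier G" using x gc by simp
  have "x \<otimes> g = g \<otimes> x" if "P #> ?h = P #> g"
  proof -
    have "?h \<otimes> inv g \<in> P"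
      using that rcos_self[OF hc P(1)] subgroup.rcos_module_imp[OF P(1) is_group gc] by simp
    moreover have "?h \<otimes> inv g \<otimes> g = ?h" using hc gc by (simp add: m_assoc)
    moreover have "?h \<in> conj_class G g" using x unfolding conj_class_def by blast
    ultimately have "?h \<otimes> inv g = \<one>"
      using central_prime_power_mult_mem_conj_class_eq_one[OF fin q P gc] g S_qprime_iff by auto
    then have "?h = g" using hc gc by (metis inv_solve_right l_one one_closed)
    then show ?thesis using x gc by (metis inv_solve_right m_closed)
  qed
  moreover have "?h = g" if "x \<otimes> g = g \<otimes> x" using that x gc by (simp add: m_assoc)
  ultimately show ?thesis by auto
qed

lemma prime_dvd_card_moved_central_rcosets:
  assumes fin: "finite (carrier G)" and q: "Factorial_Ring.prime q"
    and P: "P \<subseteq> centre G" and Q: "subgroup Q G" "card Q = q ^ n"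
    and W: "W \<subseteq> carrier G" and W_conj: "\<And>x g. x \<in> Q \<Longrightarrow> g \<in> W \<Longrightarrow> x \<otimes> g \<otimes> inv x \<in> W"
  shows "q dvd card {C \<in> (\<lambda>g. P #> g) ` W. \<exists>x \<in> Q. (\<lambda>c. x \<otimes> c \<otimes> inv x) ` C \<noteq> C}"
proof -
  interpret Q: group "G\<lparr>carrier := Q\<rparr>"
    using Q(1) subgroup.subgroup_is_group is_group by blast
  have Qcar: "Q \<subseteq> carrier G" using Q(1) subgroup.subset by blast
  have Pcar: "P \<subseteq> carrier G" using P centre_closed by blast
  have coset_sub: "C \<subseteq> carrier G" if "C \<in> (\<lambda>g. P #> g) ` W" for C
    using that W r_coset_subset_G[OF Pcar] by auto
  have "q dvd card {C \<in> (\<lambda>g. P #> g) ` W.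
      \<exists>x \<in> carrier (G\<lparr>carrier := Q\<rparr>). (\<lambda>c. x \<otimes> c \<otimes> inv x) ` C \<noteq> C}"
  proof (rule prime_dvd_card_non_fixed_points_restrict[OF Q.is_group _ q])
    show "card (carrier (G\<lparr>carrier := Q\<rparr>)) = q ^ n" using Q(2) by simp
    show "finite ((\<lambda>g. P #> g) ` W)" using fin W finite_subset by blast
    show "(\<lambda>c. x \<otimes> c \<otimes> inv x) ` C \<in> (\<lambda>g. P #> g) ` W"
      if "x \<in> carrier (G\<lparr>carrier := Q\<rparr>)" "C \<in> (\<lambda>g. P #> g) ` W" for x C
      using that conj_image_central_rcos[OF P] W_conj Qcar W by (auto simp: subsetD)
    show "(\<lambda>c. \<one>\<^bsub>G\<lparr>carrier := Q\<rparr>\<^esub> \<otimes> c \<otimes> inv \<one>\<^bsub>G\<lparr>carrier := Q\<rparr>\<^esub>) ` C = C"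
      if "C \<in> (\<lambda>g. P #> g) ` W" for C
      using coset_sub[OF that] by (auto simp: subsetD)
    show "(\<lambda>c. (x \<otimes>\<^bsub>G\<lparr>carrier := Q\<rparr>\<^esub> y) \<otimes> c \<otimes> inv (x \<otimes>\<^bsub>G\<lparr>carrier := Q\<rparr>\<^esub> y)) ` C
        = (\<lambda>c. x \<otimes> c \<otimes> inv x) ` (\<lambda>c. y \<otimes> c \<otimes> inv y) ` C"
      if "x \<in> carrier (G\<lparr>carrier := Q\<rparr>)" "y \<in> carrier (G\<lparr>carrier := Q\<rparr>)" "C \<in> (\<lambda>g. P #> g) ` W"
      for x y C
    proof -
      have "x \<in> carrier G" "y \<in> carrier G" "C \<subseteq> carrier G"
        using that Qcar coset_sub by auto
      then show ?thesis unfolding image_image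
        by (intro image_cong) (auto simp: inv_mult_group m_assoc subsetD)
    qed
  qed
  then show ?thesis by simp
qed

lemma fixed_central_rcosets_S_qprime:
  assumes fin: "finite (carrier G)" and q: "Factorial_Ring.prime q"
    and P: "subgroup P G" "P \<subseteq> centre G" "card P = q ^ a" and Q: "Q \<subseteq> carrier G"
  shows "{C \<in> (\<lambda>g. P #> g) ` S_qprime G \<pi> q. \<forall>x \<in> Q. (\<lambda>c. x \<otimes> c \<otimes> inv x) ` C = C}
    = (\<lambda>g. P #> g) ` (S_qprime G \<pi> q \<inter> centralizer G Q)"
proof -
  have fixed_iff: "(\<forall>x \<in> Q. (\<lambda>c. x \<otimes> c \<otimes> inv x) ` (P #> g) = P #> g) \<longleftrightarrow> g \<in> centralizer G Q"
    if g: "g \<in> S_qprime G \<pi> q" for g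
  proof -
    have "g \<in> carrier G" using g S_qprime_subset_carrier by auto
    then show ?thesis
      using conj_image_central_rcos[OF P(2)] S_qprime_rcos_conj_eq_iff[OF fin q P g] Q
      unfolding centralizer_def by (auto simp: subsetD)
  qed
  show ?thesis
  proof (intro equalityI subsetI)
    fix C assume "C \<in> {C \<in> (\<lambda>g. P #> g) ` S_qprime G \<pi> q. \<forall>x \<in> Q. (\<lambda>c. x \<otimes> c \<otimes> inv x) ` C = C}"
    then obtain g where "g \<in> S_qprime G \<pi> q" "C = P #> g"
      "\<forall>x \<in> Q. (\<lambda>c. x \<otimes> c \<otimes> inv x) ` C = C" by blast
    then show "C \<in> (\<lambda>g. P #> g) ` (S_qprime G \<pi> q \<inter> centralizer G Q)" using fixed_iff by blast
  next
    fix C assume "C \<in> (\<lambda>g. P #> g) ` (S_qprime G \<pi> q \<inter> centralizer G Q)"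
    then obtain g where "g \<in> S_qprime G \<pi> q" "g \<in> centralizer G Q" "C = P #> g" by blast
    then show "C \<in> {C \<in> (\<lambda>g. P #> g) ` S_qprime G \<pi> q. \<forall>x \<in> Q. (\<lambda>c. x \<otimes> c \<otimes> inv x) ` C = C}"
      using fixed_iff by blast
  qed
qed

lemma card_S_qprime_mod_centralized:
  assumes fin: "finite (carrier G)" and q: "Factorial_Ring.prime q" "q \<in> \<pi>"
    and P: "subgroup P G" "P \<subseteq> centre G" "card P = q ^ a"
    and Q: "subgroup Q G" "card Q = q ^ n"
  shows "card (S_qprime G \<pi> q) mod (q * card P)
    = card (S_qprime G \<pi> q \<inter> centralizer G Q) mod (q * card P)"
proof -
  let ?S = "S_qprime G \<pi> q"
  let ?X = "S_qprime G \<pi> q \<inter> centralizer G Q"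
  let ?E = "(\<lambda>g. P #> g) ` ?S"
  let ?N = "{C \<in> ?E. \<exists>x \<in> Q. (\<lambda>c. x \<otimes> c \<otimes> inv x) ` C \<noteq> C}"
  have Qcar: "Q \<subseteq> carrier G" using Q(1) subgroup.subset by blast
  have P_closed_S: "p \<otimes> g \<in> ?S" if "p \<in> P" "g \<in> ?S" for p g
    using S_qprime_central_subgroup_mult[OF fin q P that] .
  have P_closed_X: "p \<otimes> g \<in> ?X" if "p \<in> P" "g \<in> ?X" for p g
    using P_closed_S subgroup.m_closed[OF subgroup_centralizer[OF Qcar]]
      centre_subset_centralizer[OF Qcar] P(2) that by blast
  have "card ?S = card P * card ?E"
    using card_subgroup_mult_card_rcoset_image[OF fin P(1) S_qprime_subset_carrier P_closed_S] by simp
  also have "card ?E = card (?E \<inter> ?N) + card (?E - ?N)"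
    using fin S_qprime_subset_carrier by (intro card_Int_Diff) (blast intro: finite_subset)
  also have "?E \<inter> ?N = ?N" by blast
  also have "?E - ?N = {C \<in> ?E. \<forall>x \<in> Q. (\<lambda>c. x \<otimes> c \<otimes> inv x) ` C = C}"
    by blast
  also have "\<dots> = (\<lambda>g. P #> g) ` ?X"
    using fixed_central_rcosets_S_qprime[OF fin q(1) P Qcar] .
  finally have "card ?S = card P * card ?N + card P * card ((\<lambda>g. P #> g) ` ?X)"
    by (simp add: add_mult_distrib2)
  also have "card P * card ((\<lambda>g. P #> g) ` ?X) = card ?X"
    using card_subgroup_mult_card_rcoset_image[OF fin P(1) _ P_closed_X] S_qprime_subset_carrier
    by blast
  finally have count: "card ?S = card P * card ?N + card ?X" .
  have "q dvd card ?N"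
    by (rule prime_dvd_card_moved_central_rcosets[OF fin q(1) P(2) Q S_qprime_subset_carrier])
      (use S_qprime_conj Qcar in \<open>auto simp: subsetD\<close>)
  then obtain k where "card ?N = q * k" ..
  then have "card ?S = card ?X + k * (q * card P)" using count by simp
  then show ?thesis by simp
qed

lemma prime_mult_card_dvd_card_psubset:
  assumes fin: "finite (carrier G)" and q: "Factorial_Ring.prime q"
    and P: "subgroup P G" and A: "subgroup A G" "card A = q ^ b" and PA: "P \<subset> A"
  shows "q * card P dvd card A"
proof -
  have "card P dvd card A"
    using card_subgroup_dvd_card_subgroup[OF fin P A(1)] PA by blast
  then obtain i where i: "card P = q ^ i" using A(2) divides_primepow_nat[OF q] by auto
  have "finite A" using fin A(1) subgroup.subset finite_subset by blast
  then have "q ^ i < q ^ b" using psubset_card_mono[OF _ PA] i A(2) by simp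
  then have "Suc i \<le> b" using power_less_imp_less_exp prime_gt_1_nat[OF q] by (simp add: Suc_le_eq)
  then show ?thesis using le_imp_power_dvd[of "Suc i" b q] i A(2) by simp
qed

lemma card_centre_sylow_dvd_card_S_qprime_centralized:
  assumes fin: "finite (carrier G)" and q: "Factorial_Ring.prime q" "q \<in> \<pi>"
    and Q: "sylow_subgroup G q Q"
  shows "card (centre (G\<lparr>carrier := Q\<rparr>)) dvd card (S_qprime G \<pi> q \<inter> centralizer G Q)"
proof (rule card_subgroup_dvd_card_closed[OF fin])
  have Qsub: "subgroup Q G" using Q unfolding sylow_subgroup_def by simp
  have Qcar: "Q \<subseteq> carrier G" using Qsub subgroup.subset by blast
  show "subgroup (centre (G\<lparr>carrier := Q\<rparr>)) G" using subgroup_centre_subgroup[OF Qsub] .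
  show "S_qprime G \<pi> q \<inter> centralizer G Q \<subseteq> carrier G" using S_qprime_subset_carrier by blast
  fix y g assume y: "y \<in> centre (G\<lparr>carrier := Q\<rparr>)" and g: "g \<in> S_qprime G \<pi> q \<inter> centralizer G Q"
  have yQ: "y \<in> Q" "y \<in> centralizer G Q" using y centre_subgroup_eq_centralizer[OF Qcar] by auto
  have yc: "y \<in> carrier G" using yQ Qcar by auto
  have yg: "y \<otimes> g \<in> centralizer G Q"
    using subgroup.m_closed[OF subgroup_centralizer[OF Qcar] yQ(2)] g by blast
  have g_pi: "pi_element G \<pi> g" using g S_qprime_iff by blast
  have comm: "y \<otimes> g = g \<otimes> y" using g yQ(1) unfolding centralizer_def by blast
  have "y [^] q ^ multiplicity q (order G) = \<one>"
    using pow_card_subgroup_eq_one[OF fin Qsub yQ(1)] Q unfolding sylow_subgroup_def ppart_def by simp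
  then have "pi_element G \<pi> (y \<otimes> g)"
    using pi_element_mult_commuting_prime_power_element[OF q yc g_pi comm] by blast
  moreover have "Q \<subseteq> centralizer G {y \<otimes> g}"
    using yg Qcar unfolding centralizer_def by auto
  then have "\<not> q dvd card (conj_class G (y \<otimes> g))"
    using not_dvd_card_conj_class_if_centralized_by_sylow[OF fin q(1) Q] yg centralizer_subset_carrier
    by blast
  ultimately show "y \<otimes> g \<in> S_qprime G \<pi> q \<inter> centralizer G Q"
    using yg S_qprime_iff by blast
qed

lemma ppart_card_centre_dvd_ppart_card_S_qprime:
  assumes fin: "finite (carrier G)" and q: "Factorial_Ring.prime q" "q \<in> \<pi>"
  shows "ppart q (card (centre G)) dvd ppart q (card (S_qprime G \<pi> q))"
proof -
  obtain P where P: "subgroup P G" "P \<subseteq> centre G" "card P = ppart q (card (centre G))"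
    using exists_sylow_subgroup_of_subgroup[OF fin centre_subgroup q(1)] by blast
  have "card P dvd card (S_qprime G \<pi> q)"
    using card_subgroup_dvd_card_closed[OF fin P(1) S_qprime_subset_carrier]
      S_qprime_central_subgroup_mult[OF fin q P(1,2)] P(3) unfolding ppart_def by blast
  then show ?thesis
    using ppart_dvd_ppart[OF q(1) card_S_qprime_neq_zero[OF fin q(1)]] P(3) by simp
qed

lemma centre_sylow_subset_centre_if_ppart_eq:
  assumes fin: "finite (carrier G)" and q: "Factorial_Ring.prime q" "q \<in> \<pi>"
    and eq: "ppart q (card (centre G)) = ppart q (card (S_qprime G \<pi> q))"
    and Q: "sylow_subgroup G q Q"
  shows "centre (G\<lparr>carrier := Q\<rparr>) \<subseteq> centre G"
proof (rule ccontr)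
  assume not_central: "\<not> centre (G\<lparr>carrier := Q\<rparr>) \<subseteq> centre G"
  let ?A = "centre (G\<lparr>carrier := Q\<rparr>)"
  let ?S = "S_qprime G \<pi> q"
  have Qsub: "subgroup Q G" and cardQ: "card Q = q ^ multiplicity q (order G)"
    using Q unfolding sylow_subgroup_def ppart_def by auto
  have Qcar: "Q \<subseteq> carrier G" using Qsub subgroup.subset by blast
  have A: "subgroup ?A G" using subgroup_centre_subgroup[OF Qsub] .
  obtain P where P: "subgroup P G" "P \<subseteq> centre G" "card P = ppart q (card (centre G))"
    using exists_sylow_subgroup_of_subgroup[OF fin centre_subgroup q(1)] by blast
  have cardP: "card P = q ^ multiplicity q (card (centre G))" using P(3) unfolding ppart_def .
  have "P \<subseteq> Q" using central_prime_power_subgroup_subset_sylow[OF fin q(1) P(1,2) cardP Q] .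
  then have "P \<subset> ?A"
    using centre_subset_centralizer[OF Qcar] P(2) not_central
    unfolding centre_subgroup_eq_centralizer[OF Qcar] by blast
  moreover obtain b where "card ?A = q ^ b"
    using card_subgroup_dvd_card_subgroup[OF fin A Qsub] cardQ divides_primepow_nat[OF q(1)]
      centre_subgroup_eq_centralizer[OF Qcar] by auto
  ultimately have "q * card P dvd card ?A"
    using prime_mult_card_dvd_card_psubset[OF fin q(1) P(1) A] by blast
  also have "card ?A dvd card (?S \<inter> centralizer G Q)"
    using card_centre_sylow_dvd_card_S_qprime_centralized[OF fin q Q] .
  finally have "q * card P dvd card (?S \<inter> centralizer G Q)" .
  then have "q * card P dvd card ?S"
    using card_S_qprime_mod_centralized[OF fin q P(1,2) cardP Qsub cardQ]
    by (simp add: dvd_eq_mod_eq_0)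
  then show False
    using not_prime_mult_ppart_dvd[OF q(1) card_S_qprime_neq_zero[OF fin q(1)]] eq P(3) by simp
qed

end

theorem theoremC:
  fixes G :: "('a, 'b) monoid_scheme" and \<pi> :: "nat set" and q :: nat
  assumes "group G" and "finite (carrier G)"
    and "\<forall>p \<in> \<pi>. Factorial_Ring.prime p" and "q \<in> \<pi>"
  shows "ppart q (card (centre G)) dvd ppart q (card (S_qprime G \<pi> q)) \<and>
         (ppart q (card (centre G)) = ppart q (card (S_qprime G \<pi> q)) \<longrightarrow>
         (\<forall>Q. sylow_subgroup G q Q \<longrightarrow> centre (G\<lparr>carrier := Q\<rparr>) \<subseteq> centre G))"
proof -
  interpret group G by fact
  have q: "Factorial_Ring.prime q" "q \<in> \<pi>" using assms(3,4) by auto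
  show ?thesis
    using ppart_card_centre_dvd_ppart_card_S_qprime[OF assms(2) q]
      centre_sylow_subset_centre_if_ppart_eq[OF assms(2) q] by blast
qed

end
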